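(* Let $\mathcal{A}$ be a weighted pushdown system. The following are equivalent: (i) there is an infinite path $\pi_1$ from the initial configuration with $\mathrm{LimSupAvg}(\pi_1)>0$; (ii) there is an infinite path $\pi_2$ from the initial configuration with $\mathrm{LimInfAvg}(\pi_2)>0$; (iii) there is a finite path from the initial configuration that contains (as a contiguous segment) a good cycle.
   Context: A weighted pushdown system (WPS) is $\mathcal{A}=\langle Q,\Gamma,q_0,E,w\rangle$ with finite state set $Q$, initial state $q_0$, finite stack alphabet $\Gamma$ containing a bottom symbol $\bot$ that can be neither pushed nor popped, edges $E\subseteq(Q\times\Gamma)\times(Q\times\mathrm{Com}(\Gamma))$ with $\mathrm{Com}(\Gamma)=\{\mathit{skip},\mathit{pop}\}\cup\{\mathit{push}(z):z\in\Gamma\}$, and weights $w:E\to\mathbb{Z}$. Configurations are $(\alpha,q)$, $\alpha\in\Gamma^+$ (top = last symbol), $q\in Q$; initial configuration $(\bot,q_0)$; $(\alpha',q')$ is a successor of $(\alpha,q)$ if some edge $(q,\gamma,q',\mathit{com})$ has $\gamma=\mathrm{Top}(\alpha)$ and $\alpha'=\mathit{com}(\alpha)$. A path is a sequence of successive configurations; $w(\pi)$ is the sum of weights of its edges, and for an infinite path $\pi$, $\mathrm{LimSupAvg}(\pi)=\limsup_i w(\pi[0,i])/i$ and $\mathrm{LimInfAvg}(\pi)=\liminf_i w(\pi[0,i])/i$ where $\pi[0,i]$ is the prefix with $i$ edges. A configuration $c_i=(\alpha_i,q_i)$ of a path is a local minimum if $\alpha_i$ is a prefix of $\alpha_j$ for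 all $j\geq i$ in the path. A good cycle is a finite path $\langle c_1,\dots,c_n\rangle$ with $c_1=(\alpha_1,q_1)$, $c_n=(\alpha_n,q_n)$ such that $w>0$, $c_1$ is a local minimum of this path, $q_1=q_n$ and $\mathrm{Top}(\alpha_1)=\mathrm{Top}(\alpha_n)$. *)

theory Defs
  imports Complex_Main "HOL-Library.Liminf_Limsup" "HOL-Library.Extended_Real" "HOL-Library.Sublist"
begin

datatype 'g com = Skip | Pop | Push 'g

type_synonym ('q,'g) edge = "'q \<times> 'g \<times> 'q \<times> 'g com"

(* Configurations (alpha, q); the top of the stack is the LAST list element *)
type_synonym ('q,'g) config = "'g list \<times> 'q"

fun apply_com :: "'g com \<Rightarrow> 'g list \<Rightarrow> 'g list" where
  "apply_com Skip \<alpha> = \<alpha>"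
| "apply_com Pop \<alpha> = butlast \<alpha>"
| "apply_com (Push z) \<alpha> = \<alpha> @ [z]"

(* Well-formed weighted pushdown system <Q, Gamma, q0, E, w> with bottom symbol bsym.
   The weight function is any w :: edge => int (only its values on E matter). *)
definition wps :: "'q set \<Rightarrow> 'g set \<Rightarrow> 'q \<Rightarrow> 'g \<Rightarrow> ('q,'g) edge set \<Rightarrow> bool" where
  "wps Q \<Gamma> q0 bsym E \<longleftrightarrow>
     finite Q \<and> finite \<Gamma> \<and> q0 \<in> Q \<and> bsym \<in> \<Gamma> \<and>
     E \<subseteq> {(q,\<gamma>,q',c). q \<in> Q \<and> \<gamma> \<in> \<Gamma> \<and> q' \<in> Q \<and>
                         (c = Skip \<or> c = Pop \<or> (\<exists>z\<in>\<Gamma>. c = Push z))} \<and>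
     (\<forall>q q'. (q, bsym, q', Pop) \<notin> E) \<and>
     (\<forall>q \<gamma> q'. (q, \<gamma>, q', Push bsym) \<notin> E)"

definition step :: "('q,'g) edge set \<Rightarrow> ('q,'g) config \<Rightarrow> ('q,'g) edge \<Rightarrow> ('q,'g) config \<Rightarrow> bool" where
  "step E c e c' \<longleftrightarrow> e \<in> E \<and>
     (case e of (p, \<gamma>, p', cm) \<Rightarrow>
        snd c = p \<and> fst c \<noteq> [] \<and> last (fst c) = \<gamma> \<and> snd c' = p' \<and> fst c' = apply_com cm (fst c))"

definition inf_path :: "('q,'g) edge set \<Rightarrow> (nat \<Rightarrow> ('q,'g) config) \<Rightarrow> (nat \<Rightarrow> ('q,'g) edge) \<Rightarrow> bool" where
  "inf_path E c e \<longleftrightarrow> (\<forall>i. step E (c i) (e i) (c (Suc i)))"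

definition fin_path :: "('q,'g) edge set \<Rightarrow> (nat \<Rightarrow> ('q,'g) config) \<Rightarrow> (nat \<Rightarrow> ('q,'g) edge) \<Rightarrow> nat \<Rightarrow> bool" where
  "fin_path E c e n \<longleftrightarrow> (\<forall>i<n. step E (c i) (e i) (c (Suc i)))"

definition pweight :: "(('q,'g) edge \<Rightarrow> int) \<Rightarrow> (nat \<Rightarrow> ('q,'g) edge) \<Rightarrow> nat \<Rightarrow> int" where
  "pweight w e i = (\<Sum>k<i. w (e k))"

definition lim_sup_avg :: "(('q,'g) edge \<Rightarrow> int) \<Rightarrow> (nat \<Rightarrow> ('q,'g) edge) \<Rightarrow> ereal" where
  "lim_sup_avg w e = limsup (\<lambda>i. ereal (real_of_int (pweight w e i) / real i))"

definition lim_inf_avg :: "(('q,'g) edge \<Rightarrow> int) \<Rightarrow> (nat \<Rightarrow> ('q,'g) edge) \<Rightarrow> ereal" where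
  "lim_inf_avg w e = liminf (\<lambda>i. ereal (real_of_int (pweight w e i) / real i))"

definition good_cycle :: "('q,'g) edge set \<Rightarrow> (('q,'g) edge \<Rightarrow> int) \<Rightarrow> (nat \<Rightarrow> ('q,'g) config) \<Rightarrow> (nat \<Rightarrow> ('q,'g) edge) \<Rightarrow> nat \<Rightarrow> bool" where
  "good_cycle E w c e n \<longleftrightarrow> fin_path E c e n \<and> pweight w e n > 0 \<and>
     (\<forall>j\<le>n. prefix (fst (c 0)) (fst (c j))) \<and>
     snd (c 0) = snd (c n) \<and> last (fst (c 0)) = last (fst (c n))"

end

theory Submission
  imports Defs
begin

(* We prove (i) ==> (iii) ==> (ii) ==> (i).  Step (ii) ==> (i) is liminf <= limsup.

   (iii) ==> (ii): a good cycle never looks below its initial stack and returns to the same state and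
   top symbol, so by the replay lemma it can be fired again on the stack it leaves behind.  Following
   the prefix and then pumping the cycle forever gives a lasso-shaped path whose average weight
   converges to the positive mean weight of the cycle.

   (i) ==> (iii), contrapositively: if no good cycle is reachable, the prefix weights of every infinite
   path are bounded above, so its upper mean-payoff is at most 0.  Along the path some label (state,
   top symbol) recurs at infinitely many local minima.  For a time t after such a local minimum g,
   the excursion of the path above the lowest level it will later reach is summarised, level by
   level, by a run built from representative descents (one per descent type) whose weight is at most
   a constant below the weight gained by the path; closing it up to the label of g with a
   representative return yields a cycle at g, which must have non-positive weight. *)

section \<open>Finite runs as edge lists\<close>

fun succ_config :: "('q,'g) edge \<Rightarrow> ('q,'g) config \<Rightarrow> ('q,'g) config" where
  "succ_config (p,\<gamma>,p',cm) (\<alpha>,q) = (apply_com cm \<alpha>, p')"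

fun run :: "('q,'g) edge list \<Rightarrow> ('q,'g) config \<Rightarrow> ('q,'g) config" where
  "run [] z = z"
| "run (x#xs) z = run xs (succ_config x z)"

fun valid_run :: "('q,'g) edge set \<Rightarrow> ('q,'g) config \<Rightarrow> ('q,'g) edge list \<Rightarrow> bool" where
  "valid_run E z [] = True"
| "valid_run E z (x#xs) = (step E z x (succ_config x z) \<and> valid_run E (succ_config x z) xs)"

definition stays_above :: "'g list \<Rightarrow> ('q,'g) config \<Rightarrow> ('q,'g) edge list \<Rightarrow> bool" where
  "stays_above \<alpha> z xs \<longleftrightarrow> (\<forall>i\<le>length xs. prefix \<alpha> (fst (run (take i xs) z)))"

definition good_run :: "('q,'g) edge set \<Rightarrow> (('q,'g) edge \<Rightarrow> int) \<Rightarrow> ('q,'g) config \<Rightarrow> ('q,'g) edge list \<Rightarrow> bool" where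
  "good_run E w z Cy \<longleftrightarrow> valid_run E z Cy \<and> sum_list (map w Cy) > 0 \<and> stays_above (fst z) z Cy \<and>
     snd (run Cy z) = snd z \<and> last (fst (run Cy z)) = last (fst z)"

lemma step_succ_config: "step E z x z' \<Longrightarrow> z' = succ_config x z"
  by (cases z; cases z'; cases x) (auto simp: step_def)

lemma succ_config_eq: "succ_config x z = (apply_com (snd (snd (snd x))) (fst z), fst (snd (snd x)))"
  by (cases x; cases z) auto

lemma run_append [simp]: "run (xs @ ys) z = run ys (run xs z)"
  by (induction xs arbitrary: z) auto

lemma valid_run_append [simp]: "valid_run E z (xs @ ys) \<longleftrightarrow> valid_run E z xs \<and> valid_run E (run xs z) ys"
  by (induction xs arbitrary: z) auto

lemma valid_run_nth:
  "valid_run E z xs \<Longrightarrow> k < length xs \<Longrightarrow> step E (run (take k xs) z) (xs ! k) (run (take (Suc k) xs) z)"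
proof (induction xs arbitrary: z k)
  case (Cons x xs)
  then show ?case by (cases k) auto
qed simp

lemma valid_run_Cons_nonempty: "valid_run E z (x # xs) \<Longrightarrow> fst z \<noteq> []"
  by (cases x) (simp add: step_def)

lemma stays_above_Nil [simp]: "stays_above \<alpha> z [] \<longleftrightarrow> prefix \<alpha> (fst z)"
  by (simp add: stays_above_def)

lemma stays_above_start: "stays_above \<alpha> z xs \<Longrightarrow> prefix \<alpha> (fst z)"
  unfolding stays_above_def by (metis le0 run.simps(1) take_0)

lemma stays_above_Cons:
  "stays_above \<alpha> z (x # xs) \<longleftrightarrow> prefix \<alpha> (fst z) \<and> stays_above \<alpha> (succ_config x z) xs"
  unfolding stays_above_def by (simp flip: less_Suc_eq_le add: All_less_Suc2)

lemma stays_above_append [simp]: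
  "stays_above \<alpha> z (xs @ ys) \<longleftrightarrow> stays_above \<alpha> z xs \<and> stays_above \<alpha> (run xs z) ys"
  by (induction xs arbitrary: z) (auto simp: stays_above_Cons dest: stays_above_start)

lemma stays_above_mono: "prefix \<alpha> \<alpha>' \<Longrightarrow> stays_above \<alpha>' z xs \<Longrightarrow> stays_above \<alpha> z xs"
  unfolding stays_above_def using prefix_order.trans by blast

lemma last_append_same_top: "\<alpha> \<noteq> [] \<Longrightarrow> \<beta> \<noteq> [] \<Longrightarrow> last \<beta> = last \<alpha> \<Longrightarrow> last (\<beta> @ v) = last (\<alpha> @ v)"
  by (cases "v = []") auto

lemma replay_step:
  assumes st: "step E (\<alpha>\<^sub>0 @ u, q) x z'" and above: "prefix \<alpha>\<^sub>0 (fst z')"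
    and ne: "\<alpha>\<^sub>0 \<noteq> []" "\<beta>\<^sub>0 \<noteq> []" and top: "last \<beta>\<^sub>0 = last \<alpha>\<^sub>0"
  obtains u' where "fst z' = \<alpha>\<^sub>0 @ u'" "step E (\<beta>\<^sub>0 @ u, q) x (\<beta>\<^sub>0 @ u', snd z')"
proof -
  obtain p \<gamma> p' cm where x: "x = (p,\<gamma>,p',cm)" by (cases x) auto
  from st have E: "x \<in> E" "q = p" "last (\<alpha>\<^sub>0 @ u) = \<gamma>" and z': "z' = (apply_com cm (\<alpha>\<^sub>0 @ u), p')"
    by (auto simp: step_def x prod_eq_iff)
  have top_\<beta>: "last (\<beta>\<^sub>0 @ u) = \<gamma>" using E(3) last_append_same_top[OF ne top] by metis
  obtain u' where u': "apply_com cm (\<alpha>\<^sub>0 @ u) = \<alpha>\<^sub>0 @ u'" "apply_com cm (\<beta>\<^sub>0 @ u) = \<beta>\<^sub>0 @ u'"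
  proof (cases cm)
    case Pop
    have "u \<noteq> []"
    proof
      assume "u = []"
      then have "prefix \<alpha>\<^sub>0 (butlast \<alpha>\<^sub>0)" using above Pop z' by simp
      then have "length \<alpha>\<^sub>0 \<le> length (butlast \<alpha>\<^sub>0)" using prefix_length_le by blast
      then show False using ne(1) by (cases "length \<alpha>\<^sub>0") auto
    qed
    then show ?thesis using that[of "butlast u"] Pop by (simp add: butlast_append)
  qed (use that in auto)
  show ?thesis
    by (rule that[of u']) (use E top_\<beta> ne(2) u' z' in \<open>auto simp: step_def x\<close>)
qed

(* Replay lemma: a run from \<alpha>\<^sub>0 @ u that never goes below \<alpha>\<^sub>0 only depends on the top symbol of \<alpha>\<^sub>0;
   it can be replayed from \<beta>\<^sub>0 @ u for any stack \<beta>\<^sub>0 with the same top, with the same effect above. *)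
lemma replay:
  assumes "valid_run E (\<alpha>\<^sub>0 @ u, q) xs" "stays_above \<alpha>\<^sub>0 (\<alpha>\<^sub>0 @ u, q) xs"
    and "\<alpha>\<^sub>0 \<noteq> []" "\<beta>\<^sub>0 \<noteq> []" "last \<beta>\<^sub>0 = last \<alpha>\<^sub>0"
  shows "\<exists>v. fst (run xs (\<alpha>\<^sub>0 @ u, q)) = \<alpha>\<^sub>0 @ v \<and> run xs (\<beta>\<^sub>0 @ u, q) = (\<beta>\<^sub>0 @ v, snd (run xs (\<alpha>\<^sub>0 @ u, q))) \<and>
     valid_run E (\<beta>\<^sub>0 @ u, q) xs \<and> stays_above \<beta>\<^sub>0 (\<beta>\<^sub>0 @ u, q) xs"
  using assms(1,2)
proof (induction xs arbitrary: u q)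
  case (Cons x xs)
  let ?z' = "succ_config x (\<alpha>\<^sub>0 @ u, q)"
  have st: "step E (\<alpha>\<^sub>0 @ u, q) x ?z'" and rest: "valid_run E ?z' xs" "stays_above \<alpha>\<^sub>0 ?z' xs"
    using Cons.prems by (auto simp: stays_above_Cons)
  obtain u' where u': "fst ?z' = \<alpha>\<^sub>0 @ u'" "step E (\<beta>\<^sub>0 @ u, q) x (\<beta>\<^sub>0 @ u', snd ?z')"
    using replay_step[OF st stays_above_start[OF rest(2)] assms(3-5)] by blast
  have z': "?z' = (\<alpha>\<^sub>0 @ u', snd ?z')" using u'(1) by (simp add: prod_eq_iff)
  have succ_\<beta>: "succ_config x (\<beta>\<^sub>0 @ u, q) = (\<beta>\<^sub>0 @ u', snd ?z')" using step_succ_config[OF u'(2)] ..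
  show ?case
    using Cons.IH[of u' "snd ?z'"] rest z' u'(2) succ_\<beta> by (simp add: stays_above_Cons)
qed simp

section \<open>Index-based paths versus edge lists\<close>

lemma steps_valid_run:
  assumes "\<And>k. k < m \<Longrightarrow> step E (c (a + k)) (e (a + k)) (c (Suc (a + k)))"
  shows "valid_run E (c a) (map e [a..<a+m]) \<and> run (map e [a..<a+m]) (c a) = c (a + m)"
  using assms
proof (induction m)
  case (Suc m)
  have st: "step E (c (a + m)) (e (a + m)) (c (Suc (a + m)))" using Suc.prems by simp
  have "[a..<a + Suc m] = [a..<a+m] @ [a + m]" by simp
  then show ?case using Suc st step_succ_config[OF st] by simp
qed simp

lemma sum_list_map_nth: "sum_list (map w xs) = (\<Sum>k<length xs. w (xs ! k))"
  by (induction xs rule: rev_induct) (auto simp: nth_append)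

lemma pweight_upt: "pweight w e n = sum_list (map w (map e [0..<n]))"
  by (simp add: pweight_def sum_list_map_nth)

lemma sum_list_segment: "a \<le> b \<Longrightarrow> sum_list (map w (map e [a..<b])) = pweight w e b - pweight w e a"
proof -
  assume "a \<le> b"
  have "sum_list (map w (map e [a..<b])) = (\<Sum>k=a..<b. w (e k))"
    using sum_set_upt_conv_sum_list_nat[of "\<lambda>k. w (e k)" a b] by (simp add: comp_def)
  also have "\<dots> = (\<Sum>k<b. w (e k)) - (\<Sum>k<a. w (e k))"
    using \<open>a \<le> b\<close> by (simp add: sum_diff_nat_ivl lessThan_atLeast0)
  finally show ?thesis by (simp add: pweight_def)
qed

lemma good_cycle_of_good_run:
  assumes vp: "valid_run E z\<^sub>0 (P @ Cy)" and good: "good_run E w (run P z\<^sub>0) Cy"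
  shows "\<exists>c e n i j. c 0 = z\<^sub>0 \<and> fin_path E c e n \<and> i \<le> j \<and> j \<le> n \<and>
             good_cycle E w (\<lambda>k. c (i + k)) (\<lambda>k. e (i + k)) (j - i)"
proof -
  define xs where "xs = P @ Cy"
  define c where "c = (\<lambda>k. run (take k xs) z\<^sub>0)"
  define e where "e = (\<lambda>k. xs ! k)"
  define i where "i = length P"
  define n where "n = length xs"
  have path: "\<forall>k<n. step E (c k) (e k) (c (Suc k))"
    using valid_run_nth[of E z\<^sub>0 xs] vp by (simp add: c_def e_def n_def xs_def)
  have shift: "\<And>j. c (i + j) = run (take j Cy) (run P z\<^sub>0)"
    by (simp add: c_def xs_def i_def)
  have start: "c i = run P z\<^sub>0" using shift[of 0] by simp
  have len: "n - i = length Cy" by (simp add: n_def i_def xs_def)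
  have weight: "pweight w (\<lambda>k. e (i + k)) (n - i) = sum_list (map w Cy)"
    unfolding pweight_def len sum_list_map_nth by (simp add: e_def xs_def i_def)
  have "good_cycle E w (\<lambda>k. c (i + k)) (\<lambda>k. e (i + k)) (n - i)"
    unfolding good_cycle_def fin_path_def
  proof (intro conjI allI impI)
    fix k assume "k < n - i"
    then show "step E (c (i + k)) (e (i + k)) (c (i + Suc k))" using path by simp
  qed (use good weight len start in \<open>auto simp: good_run_def stays_above_def shift\<close>)
  moreover have "c 0 = z\<^sub>0" "fin_path E c e n" "i \<le> n"
    using path by (simp_all add: c_def fin_path_def i_def n_def xs_def)
  ultimately show ?thesis by blast
qed

lemma good_run_of_good_cycle:
  assumes c0: "c 0 = z\<^sub>0" and path: "fin_path E c e n" and ij: "i \<le> j" "j \<le> n"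
    and good: "good_cycle E w (\<lambda>k. c (i + k)) (\<lambda>k. e (i + k)) (j - i)"
  shows "\<exists>P Cy. valid_run E z\<^sub>0 (P @ Cy) \<and> good_run E w (run P z\<^sub>0) Cy"
proof -
  define P where "P = map e [0..<i]"
  define Cy where "Cy = map e [i..<j]"
  have st: "\<And>k. k < n \<Longrightarrow> step E (c k) (e k) (c (Suc k))" using path by (simp add: fin_path_def)
  have run_seg: "\<And>a m. a + m \<le> n \<Longrightarrow>
      valid_run E (c a) (map e [a..<a+m]) \<and> run (map e [a..<a+m]) (c a) = c (a + m)"
    by (rule steps_valid_run) (simp add: st)
  have PC: "P @ Cy = map e [0..<j]" using ij upt_add_eq_append[of 0 i "j-i"] by (simp add: P_def Cy_def)
  have rP: "run P z\<^sub>0 = c i" using run_seg[of 0 i] c0 ij by (simp add: P_def)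
  have take_Cy: "\<And>k. k \<le> j - i \<Longrightarrow> take k Cy = map e [i..<i+k]"
    using ij by (simp add: Cy_def take_map take_upt)
  have seg_Cy: "valid_run E (c i) Cy \<and> run Cy (c i) = c j"
    using run_seg[of i "j - i"] ij by (simp add: Cy_def)
  have weight: "sum_list (map w Cy) = pweight w (\<lambda>k. e (i + k)) (j - i)"
    unfolding pweight_def sum_list_map_nth by (simp add: Cy_def add.commute)
  have above: "stays_above (fst (c i)) (c i) Cy"
    unfolding stays_above_def
  proof (intro allI impI)
    fix k assume "k \<le> length Cy"
    then have "k \<le> j - i" by (simp add: Cy_def)
    then show "prefix (fst (c i)) (fst (run (take k Cy) (c i)))"
      using run_seg[of i k] take_Cy[of k] good ij by (simp add: good_cycle_def)
  qed
  have "good_run E w (c i) Cy"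
    using seg_Cy weight above good ij by (simp add: good_run_def good_cycle_def)
  then show ?thesis using run_seg[of 0 j] c0 ij PC rP by (intro exI[of _ P] exI[of _ Cy]) simp
qed

section \<open>Pumping a reachable good cycle\<close>

(* A good run never descends below its initial stack and ends in the same state with the same top
   symbol, so by the replay lemma it can be repeated arbitrarily often, from any stack with that top. *)
lemma pump_good_run:
  assumes good: "good_run E w (\<alpha>, q) Cy" and ne: "\<alpha> \<noteq> []"
  shows "\<beta> \<noteq> [] \<Longrightarrow> last \<beta> = last \<alpha> \<Longrightarrow> valid_run E (\<beta>, q) (concat (replicate k Cy))"
proof (induction k arbitrary: \<beta>)
  case (Suc k)
  have cyc: "valid_run E (\<alpha> @ [], q) Cy" "stays_above \<alpha> (\<alpha> @ [], q) Cy"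
    and ends: "snd (run Cy (\<alpha>, q)) = q" "last (fst (run Cy (\<alpha>, q))) = last \<alpha>"
    using good by (auto simp: good_run_def)
  obtain v where v: "fst (run Cy (\<alpha>, q)) = \<alpha> @ v" "run Cy (\<beta>, q) = (\<beta> @ v, q)" "valid_run E (\<beta>, q) Cy"
    using replay[OF cyc ne Suc.prems] ends(1) by auto
  have "last (\<beta> @ v) = last \<alpha>" using last_append_same_top[OF ne Suc.prems] v(1) ends(2) by simp
  then have "valid_run E (\<beta> @ v, q) (concat (replicate k Cy))" using Suc.IH Suc.prems(1) by simp
  then show ?case using v by simp
qed simp

(* The ultimately periodic edge sequence P Cy Cy Cy ... *)
definition lasso :: "'a list \<Rightarrow> 'a list \<Rightarrow> nat \<Rightarrow> 'a" where
  "lasso P Cy k = (if k < length P then P ! k else Cy ! ((k - length P) mod length Cy))"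

lemma map_lasso_periods: "map (lasso P Cy) [0..<length P + m * length Cy] = P @ concat (replicate m Cy)"
proof (induction m)
  case 0
  show ?case by (rule nth_equalityI) (auto simp: lasso_def)
next
  case (Suc m)
  let ?N = "length P + m * length Cy"
  have "map (lasso P Cy) [?N..<?N + length Cy] = Cy"
    by (rule nth_equalityI) (auto simp: lasso_def add.assoc)
  moreover have "[0..<length P + Suc m * length Cy] = [0..<?N] @ [?N..<?N + length Cy]"
    using upt_add_eq_append[of 0 ?N "length Cy"] by (simp add: algebra_simps)
  ultimately show ?case using Suc by (simp flip: replicate_append_same)
qed

lemma map_lasso_prefix:
  assumes "Cy \<noteq> []" "length P \<le> n"
  shows "map (lasso P Cy) [0..<n] =
    P @ concat (replicate ((n - length P) div length Cy) Cy) @ take ((n - length P) mod length Cy) Cy"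
proof -
  define m where "m = (n - length P) div length Cy"
  define X where "X = P @ concat (replicate m Cy)"
  have lenX: "length X = length P + m * length Cy"
    by (simp add: X_def length_concat sum_list_replicate)
  have n_split: "n = length X + (n - length P) mod length Cy"
    using assms(2) div_mult_mod_eq[of "n - length P" "length Cy"] by (simp add: lenX m_def)
  have "(n - length P) mod length Cy < length Cy" using assms(1) by simp
  then have "n \<le> length P + Suc m * length Cy" using n_split lenX by simp
  then have "map (lasso P Cy) [0..<n] = take n (map (lasso P Cy) [0..<length P + Suc m * length Cy])"
    by (simp add: take_map take_upt)
  also have "\<dots> = take n (X @ Cy)"
  proof -
    have "concat (replicate (Suc m) Cy) = concat (replicate m Cy) @ Cy"
      by (simp flip: replicate_append_same)
    then show ?thesis by (simp only: map_lasso_periods X_def append_assoc)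
  qed
  also have "\<dots> = X @ take ((n - length P) mod length Cy) Cy"
    using n_split by (metis add_diff_cancel_left' le_add1 take_all_iff take_append)
  finally show ?thesis by (simp add: X_def m_def)
qed

lemma sum_list_take_lower:
  fixes w :: "'a \<Rightarrow> int"
  shows "- sum_list (map (\<lambda>x. \<bar>w x\<bar>) ys) \<le> sum_list (map w (take r ys))"
proof (induction ys arbitrary: r)
  case (Cons y ys)
  show ?case
  proof (cases r)
    case 0
    have "0 \<le> sum_list (map (\<lambda>x. \<bar>w x\<bar>) ys)" by (induction ys) auto
    then show ?thesis using 0 by simp
  next
    case (Suc r')
    then show ?thesis using Cons.IH[of r'] abs_ge_minus_self[of "w y"] by simp
  qed
qed simp

lemma sum_list_map_concat_replicate:
  "sum_list (map w (concat (replicate m xs))) = of_nat m * sum_list (map w xs)"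
  by (induction m) (auto simp: algebra_simps)

lemma lasso_weight_lower:
  fixes w :: "('q,'g) edge \<Rightarrow> int"
  assumes ne: "Cy \<noteq> []" and nonneg: "0 \<le> sum_list (map w Cy)"
  defines "a \<equiv> real_of_int (sum_list (map w Cy)) / real (length Cy)"
  shows "\<exists>B. \<forall>n. a * real n - B \<le> real_of_int (pweight w (lasso P Cy) n)"
proof -
  define W where "W = sum_list (map w Cy)"
  define M where "M = sum_list (map (\<lambda>x. \<bar>w x\<bar>) P) + sum_list (map (\<lambda>x. \<bar>w x\<bar>) Cy)"
  have a_nonneg: "0 \<le> a" using nonneg by (simp add: a_def)
  have lower: "- M \<le> sum_list (map w (take r P)) + sum_list (map w (take s Cy))" for r s
    using sum_list_take_lower[of w P r] sum_list_take_lower[of w Cy s] by (simp add: M_def)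
  have "a * real n - (a * real (length P) + W + M) \<le> real_of_int (pweight w (lasso P Cy) n)" for n
  proof (cases "n < length P")
    case True
    then have "map (lasso P Cy) [0..<n] = take n P"
      by (intro nth_equalityI) (auto simp: lasso_def)
    then have "- M \<le> pweight w (lasso P Cy) n"
      using lower[of n 0] by (simp add: pweight_upt)
    moreover have "a * real n \<le> a * real (length P)" using True a_nonneg by (simp add: mult_left_mono)
    ultimately show ?thesis using nonneg by (simp add: W_def)
  next
    case False
    define m where "m = (n - length P) div length Cy"
    define r where "r = (n - length P) mod length Cy"
    have weight: "pweight w (lasso P Cy) n = sum_list (map w P) + int m * W + sum_list (map w (take r Cy))"
      using map_lasso_prefix[OF ne, of P n] False
      by (simp add: pweight_upt m_def r_def W_def sum_list_map_concat_replicate)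
    have "real n - real (length P) = real m * real (length Cy) + real r"
      using False div_mult_mod_eq[of "n - length P" "length Cy"] by (simp add: m_def r_def flip: of_nat_mult of_nat_add)
    also have "\<dots> \<le> (real m + 1) * real (length Cy)"
      using mod_less_divisor[of "length Cy" "n - length P"] ne by (simp add: r_def algebra_simps)
    finally have "a * (real n - real (length P)) \<le> a * ((real m + 1) * real (length Cy))"
      using a_nonneg by (rule mult_left_mono)
    also have "\<dots> = (real m + 1) * W" using ne by (simp add: a_def W_def)
    finally show ?thesis
      using weight lower[of "length P" r] by (simp add: algebra_simps)
  qed
  then show ?thesis by blast
qed

lemma inf_path_of_valid_prefixes:
  assumes "\<And>k. \<exists>N>k. valid_run E z\<^sub>0 (map e [0..<N])"
  shows "inf_path E (\<lambda>k. run (map e [0..<k]) z\<^sub>0) e"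
  unfolding inf_path_def
proof
  fix k
  obtain N where "k < N" "valid_run E z\<^sub>0 (map e [0..<N])" using assms by blast
  then show "step E (run (map e [0..<k]) z\<^sub>0) (e k) (run (map e [0..<Suc k]) z\<^sub>0)"
    using valid_run_nth[of E z\<^sub>0 "map e [0..<N]" k] by (simp add: take_map take_upt)
qed

lemma lim_inf_avg_pos:
  assumes a: "0 < a" and growth: "\<And>n. a * real n - B \<le> real_of_int (pweight w e n)"
  shows "0 < lim_inf_avg w e"
proof -
  have "\<forall>\<^sub>F n in sequentially. ereal (a / 2) \<le> ereal (real_of_int (pweight w e n) / real n)"
  proof (rule eventually_sequentiallyI[of "nat \<lceil>2 * B / a\<rceil> + 1"])
    fix n assume n: "nat \<lceil>2 * B / a\<rceil> + 1 \<le> n"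
    then have "2 * B / a < real n" by linarith
    then have "2 * B < a * real n" using a by (simp add: field_simps)
    then have "a / 2 * real n \<le> real_of_int (pweight w e n)" using growth[of n] by simp
    then show "ereal (a / 2) \<le> ereal (real_of_int (pweight w e n) / real n)"
      using n by (simp add: pos_le_divide_eq)
  qed
  then have "ereal (a / 2) \<le> lim_inf_avg w e"
    unfolding lim_inf_avg_def by (rule Liminf_bounded)
  then show ?thesis using a by (meson ereal_less(2) half_gt_zero less_le_trans)
qed

(* (iii) \<Longrightarrow> (ii): following the prefix and then pumping the good cycle forever gives a path whose
   lower mean-payoff is the (positive) mean weight of the cycle. *)
lemma lim_inf_pos_of_good_run:
  assumes vp: "valid_run E z\<^sub>0 (P @ Cy)" and good: "good_run E w (run P z\<^sub>0) Cy"
  shows "\<exists>c e. c 0 = z\<^sub>0 \<and> inf_path E c e \<and> lim_inf_avg w e > 0"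
proof -
  obtain \<alpha> q where z: "run P z\<^sub>0 = (\<alpha>, q)" by (cases "run P z\<^sub>0") auto
  have W: "0 < sum_list (map w Cy)" using good by (simp add: good_run_def)
  then have ne: "Cy \<noteq> []" by auto
  obtain x xs where Cy: "Cy = x # xs" using ne by (cases Cy) auto
  have "valid_run E (run P z\<^sub>0) Cy" using good by (simp add: good_run_def)
  then have \<alpha>: "\<alpha> \<noteq> []" using valid_run_Cons_nonempty[of E _ x xs] Cy z by (metis fst_conv)
  have pumped: "valid_run E z\<^sub>0 (map (lasso P Cy) [0..<length P + m * length Cy])" for m
    using vp z pump_good_run[OF good[unfolded z] \<alpha> \<alpha>] by (simp add: map_lasso_periods)
  have "\<exists>N>k. valid_run E z\<^sub>0 (map (lasso P Cy) [0..<N])" for k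
  proof -
    have "k < length P + Suc k * length Cy" using ne by (cases Cy) auto
    then show ?thesis using pumped by blast
  qed
  then have "inf_path E (\<lambda>k. run (map (lasso P Cy) [0..<k]) z\<^sub>0) (lasso P Cy)"
    by (rule inf_path_of_valid_prefixes)
  moreover have "0 < lim_inf_avg w (lasso P Cy)"
  proof -
    define a where "a = real_of_int (sum_list (map w Cy)) / real (length Cy)"
    obtain B where "\<forall>n. a * real n - B \<le> real_of_int (pweight w (lasso P Cy) n)"
      using lasso_weight_lower[OF ne] W by (fastforce simp: a_def)
    moreover have "0 < a" using W ne by (simp add: a_def)
    ultimately show ?thesis by (intro lim_inf_avg_pos[of a B]) auto
  qed
  ultimately show ?thesis by (intro exI[of _ "\<lambda>k. run (map (lasso P Cy) [0..<k]) z\<^sub>0"] exI[of _ "lasso P Cy"]) simp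
qed

lemma lim_sup_avg_nonpos:
  assumes bound: "\<And>t. pweight w e t \<le> B"
  shows "lim_sup_avg w e \<le> 0"
proof -
  define B' where "B' = max (real_of_int B) 0"
  have le: "ereal (real_of_int (pweight w e n) / real n) \<le> ereal (B' / real n)" for n
  proof (cases "n = 0")
    case False
    have "real_of_int (pweight w e n) \<le> B'" using bound[of n] by (simp add: B'_def le_max_iff_disj)
    then show ?thesis using False by (simp add: divide_right_mono)
  qed simp
  have lim: "(\<lambda>n. ereal (B' / real n)) \<longlonglongrightarrow> ereal 0"
    by (intro tendsto_ereal lim_const_over_n)
  have "limsup (\<lambda>n. ereal (B' / real n)) = 0"
    using lim_imp_Limsup[OF trivial_limit_sequentially lim] by (simp add: zero_ereal_def)
  moreover have "limsup (\<lambda>n. ereal (real_of_int (pweight w e n) / real n)) \<le> limsup (\<lambda>n. ereal (B' / real n))"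
    by (rule Limsup_mono) (use le in auto)
  ultimately show ?thesis by (simp add: lim_sup_avg_def)
qed

lemma lim_inf_avg_le_lim_sup_avg: "lim_inf_avg w e \<le> lim_sup_avg w e"
  unfolding lim_inf_avg_def lim_sup_avg_def by (rule Liminf_le_Limsup[OF trivial_limit_sequentially])

section \<open>Stack heights along a fixed infinite path\<close>

locale wps_path =
  fixes Q :: "'q set" and \<Gamma> :: "'g set" and q0 :: 'q and bsym :: 'g
    and E :: "('q,'g) edge set" and c :: "nat \<Rightarrow> ('q,'g) config" and e :: "nat \<Rightarrow> ('q,'g) edge"
  assumes wps: "wps Q \<Gamma> q0 bsym E" and path: "inf_path E c e" and init: "c 0 = ([bsym], q0)"
begin

definition stack :: "nat \<Rightarrow> 'g list" where "stack j = fst (c j)"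
definition state :: "nat \<Rightarrow> 'q" where "state j = snd (c j)"
definition height :: "nat \<Rightarrow> nat" where "height j = length (stack j)"

definition label :: "nat \<Rightarrow> 'q \<times> 'g" where "label j = (state j, last (stack j))"

lemma config_eq: "c j = (stack j, state j)"
  by (simp add: stack_def state_def)

lemma step_at: "step E (c j) (e j) (c (Suc j))"
  using path by (simp add: inf_path_def)

lemma stack_nonempty: "stack j \<noteq> []"
  using step_at[of j] by (cases "e j") (simp add: step_def stack_def)

lemma height_pos: "1 \<le> height j"
  using stack_nonempty[of j] by (simp add: height_def Suc_le_eq)

lemma height_init: "height 0 = 1"
  using init by (simp add: height_def stack_def)

lemma stack_Suc: "stack (Suc j) = apply_com (snd (snd (snd (e j)))) (stack j)"
  using step_succ_config[OF step_at[of j]] by (simp add: stack_def succ_config_eq)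

lemma height_Suc: "height (Suc j) \<le> height j + 1" "height j \<le> height (Suc j) + 1"
  by (cases "snd (snd (snd (e j)))"; simp add: height_def stack_Suc)+

lemma take_stack_Suc:
  assumes "m \<le> height j" "m \<le> height (Suc j)"
  shows "take m (stack (Suc j)) = take m (stack j)"
proof (cases "snd (snd (snd (e j)))")
  case Pop
  then have "m < height j" using assms stack_nonempty[of j] by (cases "height j") (auto simp: height_def stack_Suc)
  then show ?thesis using Pop by (simp add: stack_Suc take_butlast height_def)
qed (use assms in \<open>auto simp: stack_Suc height_def\<close>)

lemma take_stack_stable:
  assumes "a \<le> b" "\<And>j. a \<le> j \<Longrightarrow> j \<le> b \<Longrightarrow> m \<le> height j"
  shows "take m (stack b) = take m (stack a)"
  using assms
proof (induction b)
  case (Suc b)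
  show ?case
  proof (cases "a = Suc b")
    case False
    then have "a \<le> b" using Suc by simp
    then show ?thesis using Suc take_stack_Suc[of m b] by simp
  qed simp
qed simp

lemma stack_prefix_stable:
  assumes "a \<le> b" "\<And>j. a \<le> j \<Longrightarrow> j \<le> b \<Longrightarrow> height a \<le> height j"
  shows "prefix (stack a) (stack b)"
  using take_stack_stable[OF assms] by (metis height_def take_all_iff take_is_prefix order_refl)

lemma segment:
  assumes "a \<le> b"
  shows "valid_run E (c a) (map e [a..<b])" "run (map e [a..<b]) (c a) = c b"
  using steps_valid_run[where m="b - a" and a=a and c=c and e=e and E=E] step_at assms by auto

lemma segment_stays_above:
  assumes "a \<le> b" "\<And>j. a \<le> j \<Longrightarrow> j \<le> b \<Longrightarrow> prefix \<alpha> (stack j)"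
  shows "stays_above \<alpha> (c a) (map e [a..<b])"
  unfolding stays_above_def
proof (intro allI impI)
  fix i assume "i \<le> length (map e [a..<b])"
  then have i: "a + i \<le> b" using assms(1) by simp
  then have "run (take i (map e [a..<b])) (c a) = c (a + i)"
    using segment(2)[of a "a + i"] by (simp add: take_map take_upt)
  then show "prefix \<alpha> (fst (run (take i (map e [a..<b])) (c a)))"
    using assms(2)[of "a + i"] i by (simp add: stack_def)
qed

lemma segment_replay:
  assumes "a \<le> b" "\<And>j. a \<le> j \<Longrightarrow> j \<le> b \<Longrightarrow> prefix \<alpha>\<^sub>0 (stack j)" "stack a = \<alpha>\<^sub>0 @ u"
    and "\<alpha>\<^sub>0 \<noteq> []" "\<beta> \<noteq> []" "last \<beta> = last \<alpha>\<^sub>0"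
  shows "\<exists>v. stack b = \<alpha>\<^sub>0 @ v \<and> run (map e [a..<b]) (\<beta> @ u, state a) = (\<beta> @ v, state b) \<and>
    valid_run E (\<beta> @ u, state a) (map e [a..<b]) \<and> stays_above \<beta> (\<beta> @ u, state a) (map e [a..<b])"
proof -
  let ?xs = "map e [a..<b]"
  have ca: "c a = (\<alpha>\<^sub>0 @ u, state a)" using config_eq assms(3) by simp
  have "\<exists>v. fst (run ?xs (\<alpha>\<^sub>0 @ u, state a)) = \<alpha>\<^sub>0 @ v \<and>
      run ?xs (\<beta> @ u, state a) = (\<beta> @ v, snd (run ?xs (\<alpha>\<^sub>0 @ u, state a))) \<and>
      valid_run E (\<beta> @ u, state a) ?xs \<and> stays_above \<beta> (\<beta> @ u, state a) ?xs"
    by (rule replay) (use segment(1)[OF assms(1)] segment_stays_above[OF assms(1,2)] ca assms(4-6) in simp_all)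
  moreover have "run ?xs (\<alpha>\<^sub>0 @ u, state a) = (stack b, state b)"
    using segment(2)[OF assms(1)] ca config_eq by simp
  ultimately show ?thesis by simp
qed

lemma reachable_invariant: "state j \<in> Q \<and> set (stack j) \<subseteq> \<Gamma>"
proof (induction j)
  case 0 then show ?case using wps init by (simp add: wps_def state_def stack_def)
next
  case (Suc j)
  obtain p \<gamma> p' cm where x: "e j = (p,\<gamma>,p',cm)" by (cases "e j") auto
  have "e j \<in> E" using step_at[of j] by (simp add: step_def x)
  then have "p' \<in> Q" "cm = Skip \<or> cm = Pop \<or> (\<exists>z\<in>\<Gamma>. cm = Push z)" using wps by (auto simp: wps_def x)
  moreover have "state (Suc j) = p'"
    using step_succ_config[OF step_at[of j]] by (simp add: state_def succ_config_eq x)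
  moreover have "set (apply_com cm (stack j)) \<subseteq> set (stack j) \<union> {z. cm = Push z}"
    by (cases cm) (auto dest: in_set_butlastD)
  ultimately show ?case using Suc by (auto simp: stack_Suc x)
qed

lemma state_in_Q: "state j \<in> Q"
  using reachable_invariant by blast

lemma stack_in_\<Gamma>: "x \<in> set (stack j) \<Longrightarrow> x \<in> \<Gamma>"
  using reachable_invariant by blast

lemma label_in: "label j \<in> Q \<times> \<Gamma>"
  using state_in_Q stack_in_\<Gamma>[OF last_in_set[OF stack_nonempty]] by (simp add: label_def)

lemma finite_Q: "finite Q" and finite_\<Gamma>: "finite \<Gamma>"
  using wps by (auto simp: wps_def)


definition local_min :: "nat \<Rightarrow> bool" where
  "local_min g \<longleftrightarrow> (\<forall>j\<ge>g. height g \<le> height j)"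

lemma local_min_prefix: "local_min g \<Longrightarrow> g \<le> j \<Longrightarrow> prefix (stack g) (stack j)"
  by (rule stack_prefix_stable) (auto simp: local_min_def)

definition future_min :: "nat \<Rightarrow> nat" where
  "future_min t = (LEAST m. \<exists>j\<ge>t. height j = m)"

definition last_below :: "nat \<Rightarrow> nat \<Rightarrow> nat" where
  "last_below t l = (GREATEST j. j \<le> t \<and> height j \<le> l)"

definition first_below :: "nat \<Rightarrow> nat \<Rightarrow> nat" where
  "first_below t l = (LEAST j. t \<le> j \<and> height j \<le> l)"

lemma future_min_attained: "\<exists>j\<ge>t. height j = future_min t"
  unfolding future_min_def by (rule LeastI_ex) blast

lemma future_min_le: "t \<le> j \<Longrightarrow> future_min t \<le> height j"
  unfolding future_min_def by (rule Least_le) blast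

lemma future_min_pos: "1 \<le> future_min t"
  using future_min_attained[of t] height_pos by metis

lemma future_min_le_height: "future_min t \<le> height t"
  using future_min_le by simp

lemma last_below: "1 \<le> l \<Longrightarrow> last_below t l \<le> t \<and> height (last_below t l) \<le> l"
  unfolding last_below_def by (rule GreatestI_nat[of _ 0 t]) (auto simp: height_init)

lemma last_below_greatest: "1 \<le> l \<Longrightarrow> j \<le> t \<Longrightarrow> height j \<le> l \<Longrightarrow> j \<le> last_below t l"
  unfolding last_below_def by (rule Greatest_le_nat[of _ j t]) auto

lemma last_below_mono: "1 \<le> l \<Longrightarrow> l \<le> l' \<Longrightarrow> last_below t l \<le> last_below t l'"
  using last_below[of l t] by (intro last_below_greatest) auto

lemma last_below_height: "last_below t (height t) = t"
  using last_below[of "height t" t] last_below_greatest[of "height t" t t] height_pos[of t] by simp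

lemma last_below_above:
  assumes "1 \<le> l" "l \<le> height t" "last_below t l \<le> j" "j \<le> t"
  shows "l \<le> height j"
proof (cases "j = last_below t l")
  case True
  show ?thesis
  proof (cases "last_below t l = t")
    case False
    then have "last_below t l < t" using last_below[OF assms(1), of t] by simp
    then have "l < height (Suc (last_below t l))"
      using last_below_greatest[OF assms(1), of "Suc (last_below t l)" t] by fastforce
    then show ?thesis using True height_Suc(1)[of "last_below t l"] by simp
  qed (use True assms in simp)
next
  case False
  then show ?thesis using last_below_greatest[OF assms(1), of j t] assms(3,4) by fastforce
qed

lemma height_last_below: "1 \<le> l \<Longrightarrow> l \<le> height t \<Longrightarrow> height (last_below t l) = l"
  using last_below_above[of l t "last_below t l"] last_below[of l t] by simp

lemma last_below_prefix:
  assumes "1 \<le> l" "l \<le> height t" "last_below t l \<le> j" "j \<le> t"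
  shows "prefix (stack (last_below t l)) (stack j)"
  by (rule stack_prefix_stable)
    (use assms last_below_above[OF assms(1,2)] height_last_below[OF assms(1,2)] in auto)

lemma stack_last_below:
  assumes "1 \<le> l" "l \<le> height t"
  shows "stack (last_below t l) = take l (stack t)"
proof -
  have "take l (stack t) = take l (stack (last_below t l))"
    using last_below[OF assms(1), of t] last_below_above[OF assms] by (intro take_stack_stable) auto
  then show ?thesis using height_last_below[OF assms] by (simp add: height_def)
qed

lemma first_below: "future_min t \<le> l \<Longrightarrow> t \<le> first_below t l \<and> height (first_below t l) \<le> l"
proof -
  assume "future_min t \<le> l"
  then have "\<exists>j. t \<le> j \<and> height j \<le> l" using future_min_attained[of t] by auto
  then show ?thesis unfolding first_below_def by (rule LeastI_ex)
qed

lemma first_below_least: "t \<le> j \<Longrightarrow> height j \<le> l \<Longrightarrow> first_below t l \<le> j"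
  unfolding first_below_def by (rule Least_le) simp

lemma first_below_before: "t \<le> j \<Longrightarrow> j < first_below t l \<Longrightarrow> l < height j"
  using first_below_least[of t j l] by (meson leD not_le)

lemma first_below_height: "first_below t (height t) = t"
  using first_below[of t "height t"] first_below_least[of t t "height t"] future_min_le_height by simp

lemma first_below_above:
  assumes "future_min t \<le> l" "l \<le> height t" "t \<le> j" "j \<le> first_below t l"
  shows "l \<le> height j"
proof (cases "j = first_below t l")
  case True
  show ?thesis
  proof (cases "first_below t l = t")
    case False
    define i where "i = first_below t l - 1"
    have i: "first_below t l = Suc i" "t \<le> i" using False first_below[OF assms(1)] by (auto simp: i_def)
    then have "l < height i" using first_below_before[of t i l] by simp
    then show ?thesis using True i height_Suc(2)[of i] by simp
  qed (use True assms in simp)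
next
  case False
  then show ?thesis using first_below_before[of t j l] assms(3,4) by simp
qed

lemma height_first_below: "future_min t \<le> l \<Longrightarrow> l \<le> height t \<Longrightarrow> height (first_below t l) = l"
  using first_below_above[of t l "first_below t l"] first_below[of t l] by simp

lemma stack_first_below:
  assumes "future_min t \<le> l" "l \<le> height t"
  shows "stack (first_below t l) = take l (stack t)"
proof -
  have "take l (stack (first_below t l)) = take l (stack t)"
    using first_below[OF assms(1)] first_below_above[OF assms] by (intro take_stack_stable) auto
  then show ?thesis using height_first_below[OF assms] by (simp add: height_def)
qed

lemma local_min_first_below: "local_min (first_below t (future_min t))"
  unfolding local_min_def
proof (intro allI impI)
  fix j assume "first_below t (future_min t) \<le> j"
  then have "t \<le> j" using first_below[of t "future_min t"] by simp
  then show "height (first_below t (future_min t)) \<le> height j"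
    using height_first_below[OF order.refl future_min_le_height] future_min_le by simp
qed

lemma infinite_local_min: "infinite {g. local_min g}"
  unfolding infinite_nat_iff_unbounded_le
  using local_min_first_below first_below[OF order.refl] by blast

(* A descent from a to b: the top symbol of the stack at a is popped for the first time at b. *)
definition descent :: "nat \<Rightarrow> nat \<Rightarrow> bool" where
  "descent a b \<longleftrightarrow> a < b \<and> (\<forall>j. a \<le> j \<and> j < b \<longrightarrow> height a \<le> height j) \<and> height b + 1 = height a"

(* What matters about a descent for replaying it elsewhere. *)
definition descent_type :: "nat \<Rightarrow> nat \<Rightarrow> 'q \<times> 'g \<times> 'g \<times> 'q" where
  "descent_type a b = (state a, last (stack a), last (butlast (stack a)), state b)"

lemma first_below_descent:
  assumes "future_min t \<le> l" "l < height t"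
  shows "descent (first_below t (Suc l)) (first_below t l)"
proof -
  have h: "height (first_below t (Suc l)) = Suc l" "height (first_below t l) = l"
    using height_first_below assms by simp_all
  have "first_below t (Suc l) \<le> first_below t l"
    using first_below[OF assms(1)] by (intro first_below_least) auto
  then have "first_below t (Suc l) < first_below t l" using h by (metis le_neq_implies_less n_not_Suc_n)
  moreover have "Suc l \<le> height j" if "first_below t (Suc l) \<le> j" "j < first_below t l" for j
    using that first_below[of t "Suc l"] assms first_below_before[of t j l] by simp
  ultimately show ?thesis using h by (simp add: descent_def)
qed

lemma descent_shape:
  assumes "descent a b"
  shows "butlast (stack a) \<noteq> []" "stack b = butlast (stack a)"
    "\<And>j. a \<le> j \<Longrightarrow> j \<le> b \<Longrightarrow> prefix (butlast (stack a)) (stack j)"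
proof -
  have ab: "a < b" "height b + 1 = height a" "\<And>j. a \<le> j \<Longrightarrow> j < b \<Longrightarrow> height a \<le> height j"
    using assms by (auto simp: descent_def)
  have bottom: "take (height a - 1) (stack j) = butlast (stack a)" if "a \<le> j" "j \<le> b" for j
  proof -
    have "height a - 1 \<le> height i" if "a \<le> i" "i \<le> j" for i
    proof (cases "i < b")
      case True then show ?thesis using ab(3)[of i] that by simp
    next
      case False
      then have "i = b" using that \<open>j \<le> b\<close> by simp
      then show ?thesis using ab(2) by simp
    qed
    then have "take (height a - 1) (stack j) = take (height a - 1) (stack a)"
      using that by (intro take_stack_stable) auto
    then show ?thesis by (simp add: butlast_conv_take height_def)
  qed
  have "length (butlast (stack a)) = height b" using ab(2) by (simp add: height_def)
  then show "butlast (stack a) \<noteq> []" using height_pos[of b] by (metis le_zero_eq list.size(3) one_neq_zero)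
  show "stack b = butlast (stack a)" using bottom[of b] ab by (simp add: height_def)
  show "prefix (butlast (stack a)) (stack j)" if "a \<le> j" "j \<le> b" for j
    using bottom[OF that] by (metis take_is_prefix)
qed

lemma descent_type_in:
  assumes "descent a b"
  shows "descent_type a b \<in> Q \<times> \<Gamma> \<times> \<Gamma> \<times> Q"
proof -
  have "last (butlast (stack a)) \<in> set (stack a)"
    using descent_shape(1)[OF assms] by (meson in_set_butlastD last_in_set)
  then show ?thesis
    using state_in_Q stack_in_\<Gamma> last_in_set[OF stack_nonempty[of a]] by (simp add: descent_type_def)
qed


lemma ascent_replay:
  assumes "1 \<le> l" "l < height t" "\<beta> \<noteq> []" "last \<beta> = last (stack (last_below t l))"
  defines "xs \<equiv> map e [last_below t l..<last_below t (Suc l)]"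
  shows "valid_run E (\<beta>, state (last_below t l)) xs \<and> stays_above \<beta> (\<beta>, state (last_below t l)) xs \<and>
    run xs (\<beta>, state (last_below t l)) = (\<beta> @ [last (stack (last_below t (Suc l)))], state (last_below t (Suc l)))"
proof -
  have le: "last_below t l \<le> last_below t (Suc l)" using last_below_mono assms(1) by simp
  have below_t: "last_below t (Suc l) \<le> t" using last_below[of "Suc l" t] by simp
  obtain v where v: "stack (last_below t (Suc l)) = stack (last_below t l) @ v"
    "run xs (\<beta> @ [], state (last_below t l)) = (\<beta> @ v, state (last_below t (Suc l)))"
    "valid_run E (\<beta> @ [], state (last_below t l)) xs" "stays_above \<beta> (\<beta> @ [], state (last_below t l)) xs"
    using segment_replay[OF le _ _ stack_nonempty assms(3,4), of "[]"] last_below_prefix[OF assms(1)] assms(2) below_t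
    unfolding xs_def by fastforce
  have "length (stack (last_below t (Suc l))) = Suc l" "length (stack (last_below t l)) = l"
    using stack_last_below[of "Suc l" t] stack_last_below[OF assms(1), of t] assms(2) by (simp_all add: height_def)
  then obtain \<gamma> where "v = [\<gamma>]" using v(1) by (cases v) auto
  then show ?thesis using v by simp
qed

lemma stack_first_below_last_below:
  "future_min t \<le> l \<Longrightarrow> l \<le> height t \<Longrightarrow> stack (first_below t l) = stack (last_below t l)"
  using stack_first_below stack_last_below future_min_pos order_trans by metis

definition level_type :: "nat \<Rightarrow> nat \<Rightarrow> ('q \<times> 'g) \<times> 'q" where
  "level_type t l = (label (last_below t l), state (first_below t l))"

lemma level_type_in: "level_type t l \<in> (Q \<times> \<Gamma>) \<times> Q"
  using label_in state_in_Q by (simp add: level_type_def)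

end

lemma last_occurrence:
  fixes f :: "nat \<Rightarrow> 'a"
  assumes "l \<le> h"
  obtains l' where "l \<le> l'" "l' \<le> h" "f l' = f l" "\<And>k. l' < k \<Longrightarrow> k \<le> h \<Longrightarrow> f k \<noteq> f l"
proof -
  define l' where "l' = (GREATEST k. k \<le> h \<and> l \<le> k \<and> f k = f l)"
  have l': "l' \<le> h \<and> l \<le> l' \<and> f l' = f l"
    unfolding l'_def by (rule GreatestI_nat[of _ l h]) (use assms in auto)
  moreover have "f k \<noteq> f l" if "l' < k" "k \<le> h" for k
    using Greatest_le_nat[of "\<lambda>k. k \<le> h \<and> l \<le> k \<and> f k = f l" k h] that l' by (force simp: l'_def)
  ultimately show ?thesis using that by blast
qed

lemma card_image_cut:
  assumes "i \<le> k" "k < n" "\<And>l. k < l \<Longrightarrow> l \<le> n \<Longrightarrow> f l \<noteq> f i"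
  shows "card (f ` {Suc k..n}) < card (f ` {i..n})"
proof (rule psubset_card_mono)
  have "f l \<noteq> f i" if "l \<in> {Suc k..n}" for l using assms(3) that by simp
  then have "f i \<notin> f ` {Suc k..n}" by (metis imageE)
  moreover have "f i \<in> f ` {i..n}" using assms(1,2) by simp
  moreover have "f ` {Suc k..n} \<subseteq> f ` {i..n}" using assms(1) by auto
  ultimately show "f ` {Suc k..n} \<subset> f ` {i..n}" by blast
qed simp

section \<open>Without reachable good cycles, prefix weights are bounded\<close>

(* The path, a weight function, and the hypothesis that no good cycle can be reached from the
   initial configuration (not even off the path). *)
locale wps_path_no_good = wps_path +
  fixes w :: "_ \<Rightarrow> int"
  assumes no_good: "\<And>P Cy. valid_run E (c 0) (P @ Cy) \<Longrightarrow> \<not> good_run E w (run P (c 0)) Cy"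
begin

abbreviation pw :: "nat \<Rightarrow> int" where "pw j \<equiv> pweight w e j"

(* No closed excursion from time g that stays above the stack at g -- first along the path up to
   time k, then along an arbitrary run xs -- gains weight: otherwise it would be a good cycle. *)
lemma excursion_nonpos:
  assumes gk: "g \<le> k" and above: "\<And>j. g \<le> j \<Longrightarrow> j \<le> k \<Longrightarrow> prefix (stack g) (stack j)"
    and xs: "valid_run E (c k) xs" "stays_above (stack g) (c k) xs"
    and ends: "snd (run xs (c k)) = state g" "last (fst (run xs (c k))) = last (stack g)"
  shows "pw k - pw g + sum_list (map w xs) \<le> 0"
proof (rule ccontr)
  assume pos: "\<not> ?thesis"
  define P where "P = map e [0..<g]"
  define Cy where "Cy = map e [g..<k] @ xs"
  have P: "valid_run E (c 0) P" "run P (c 0) = c g" using segment[of 0 g] by (simp_all add: P_def)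
  have Cy: "valid_run E (c g) Cy" "run Cy (c g) = run xs (c k)"
    using segment[OF gk] xs(1) by (simp_all add: Cy_def)
  have "stays_above (stack g) (c g) Cy"
    using segment_stays_above[OF gk above] segment(2)[OF gk] xs(2) by (simp add: Cy_def)
  moreover have "sum_list (map w Cy) = pw k - pw g + sum_list (map w xs)"
    using sum_list_segment[OF gk] by (simp add: Cy_def)
  ultimately have "good_run E w (run P (c 0)) Cy"
    using P(2) Cy pos ends by (simp add: good_run_def stack_def state_def)
  then show False using no_good[of P Cy] P Cy by simp
qed

lemma ascent_nonpos:
  assumes "1 \<le> l" "l \<le> l'" "l' \<le> height t" "label (last_below t l) = label (last_below t l')"
  shows "pw (last_below t l') \<le> pw (last_below t l)"
proof -
  have "last_below t l' \<le> t" using last_below[of l' t] assms by simp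
  then show ?thesis
    using excursion_nonpos[of "last_below t l" "last_below t l'" "[]"] last_below_mono[of l l' t]
      last_below_prefix[of l t] assms
    by (simp add: config_eq label_def)
qed

(* A representative descent of each descent type (arbitrary if the type does not occur), and a
   bound on the absolute weights of all representatives. *)
definition descent_rep :: "_ \<Rightarrow> nat \<times> nat" where
  "descent_rep \<tau> = (SOME (a, b). descent a b \<and> descent_type a b = \<tau>)"

definition descent_bound :: int where
  "descent_bound = (\<Sum>\<tau>\<in>Q \<times> \<Gamma> \<times> \<Gamma> \<times> Q. \<bar>pw (snd (descent_rep \<tau>)) - pw (fst (descent_rep \<tau>))\<bar>)"

lemma descent_bound_nonneg: "0 \<le> descent_bound"
  unfolding descent_bound_def by (simp add: sum_nonneg)

(* Any descent can be replaced by the representative of its type, replayed on any stack \<beta> with the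
   right top symbol, at a loss of at most descent_bound. *)
lemma descent_summary:
  assumes d: "descent a b" and \<beta>: "\<beta> \<noteq> []" "last \<beta> = last (butlast (stack a))"
  shows "\<exists>xs. valid_run E (\<beta> @ [last (stack a)], state a) xs \<and>
     stays_above \<beta> (\<beta> @ [last (stack a)], state a) xs \<and>
     run xs (\<beta> @ [last (stack a)], state a) = (\<beta>, state b) \<and> - descent_bound \<le> sum_list (map w xs)"
proof -
  obtain a' b' where rep: "descent_rep (descent_type a b) = (a', b')" by fastforce
  have d': "descent a' b'" and ty: "descent_type a' b' = descent_type a b"
    using someI[of "\<lambda>(a', b'). descent a' b' \<and> descent_type a' b' = descent_type a b" "(a, b)"] d rep
    by (auto simp: descent_rep_def)
  have ty': "state a' = state a" "last (stack a') = last (stack a)" "state b' = state b"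
    "last (butlast (stack a')) = last (butlast (stack a))"
    using ty by (auto simp: descent_type_def)
  have ab: "a' \<le> b'" using d' by (simp add: descent_def)
  have split: "stack a' = butlast (stack a') @ [last (stack a')]" using stack_nonempty by simp
  obtain v where v: "stack b' = butlast (stack a') @ v"
    "run (map e [a'..<b']) (\<beta> @ [last (stack a')], state a') = (\<beta> @ v, state b')"
    "valid_run E (\<beta> @ [last (stack a')], state a') (map e [a'..<b'])"
    "stays_above \<beta> (\<beta> @ [last (stack a')], state a') (map e [a'..<b'])"
    using segment_replay[OF ab descent_shape(3)[OF d'] split descent_shape(1)[OF d'] \<beta>(1)] \<beta>(2) ty'(4)
    by fastforce
  have "v = []" using v(1) descent_shape(2)[OF d'] by simp
  moreover have "\<bar>pw b' - pw a'\<bar> \<le> descent_bound"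
  proof -
    let ?\<tau> = "descent_type a b"
    have "\<bar>pw (snd (descent_rep ?\<tau>)) - pw (fst (descent_rep ?\<tau>))\<bar> \<le> descent_bound"
      unfolding descent_bound_def
      by (rule member_le_sum) (use descent_type_in[OF d] finite_Q finite_\<Gamma> in auto)
    then show ?thesis using rep by simp
  qed
  ultimately show ?thesis
    using v ty' sum_list_segment[OF ab, of w e] by (intro exI[of _ "map e [a'..<b']"]) auto
qed


(* For labels L and L', a representative stretch of the path from a local minimum with label L to a
   later position with label L' (arbitrary if there is none), and a bound on the absolute weights of
   the representatives leading to L'. *)
definition return_rep :: "_ \<Rightarrow> _ \<Rightarrow> nat \<times> nat" where
  "return_rep L' L = (SOME (a, b). a \<le> b \<and> local_min a \<and> label a = L \<and> label b = L')"

definition return_bound :: "_ \<Rightarrow> int" where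
  "return_bound L' = (\<Sum>L\<in>Q \<times> \<Gamma>. \<bar>pw (snd (return_rep L' L)) - pw (fst (return_rep L' L))\<bar>)"

lemma return_summary:
  assumes ab: "a \<le> b" and min: "local_min a" and \<beta>: "\<beta> \<noteq> []" "last \<beta> = last (stack a)"
  shows "\<exists>xs. valid_run E (\<beta>, state a) xs \<and> stays_above \<beta> (\<beta>, state a) xs \<and>
     (snd (run xs (\<beta>, state a)), last (fst (run xs (\<beta>, state a)))) = label b \<and>
     - return_bound (label b) \<le> sum_list (map w xs)"
proof -
  obtain a' b' where rep: "return_rep (label b) (label a) = (a', b')" by fastforce
  have r: "a' \<le> b'" "local_min a'" "label a' = label a" "label b' = label b"
    using someI[of "\<lambda>(a', b'). a' \<le> b' \<and> local_min a' \<and> label a' = label a \<and> label b' = label b" "(a, b)"]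
      assms rep by (auto simp: return_rep_def)
  obtain v where v: "stack b' = stack a' @ v" "run (map e [a'..<b']) (\<beta> @ [], state a') = (\<beta> @ v, state b')"
    "valid_run E (\<beta> @ [], state a') (map e [a'..<b'])" "stays_above \<beta> (\<beta> @ [], state a') (map e [a'..<b'])"
    using segment_replay[OF r(1) local_min_prefix[OF r(2)] _ stack_nonempty \<beta>(1), of "[]"] \<beta>(2) r(3)
    by (fastforce simp: label_def)
  have r_a: "state a' = state a" "last (stack a') = last (stack a)" using r(3) by (simp_all add: label_def)
  have "last (\<beta> @ v) = last (stack b')"
    using last_append_same_top[OF stack_nonempty \<beta>(1), of a' v] \<beta>(2) r_a(2) v(1) by simp
  moreover have "\<bar>pw b' - pw a'\<bar> \<le> return_bound (label b)"
  proof -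
    have "\<bar>pw (snd (return_rep (label b) (label a))) - pw (fst (return_rep (label b) (label a)))\<bar> \<le> return_bound (label b)"
      unfolding return_bound_def by (rule member_le_sum) (use label_in finite_Q finite_\<Gamma> in auto)
    then show ?thesis using rep by simp
  qed
  ultimately show ?thesis
    using v r(4) r_a(1) sum_list_segment[OF r(1), of w e] by (intro exI[of _ "map e [a'..<b']"]) (auto simp: label_def)
qed

(* One level of the recursion in summary_run: climb from level l to level l+1 as the path does
   before t, simulate the excursion above level l+1 by a given run, and come back down to level l
   by a representative descent. *)
lemma wrap_level:
  assumes l: "future_min t \<le> l" "l < height t" and \<beta>: "\<beta> \<noteq> []" "last \<beta> = last (stack (last_below t l))"
    and inner: "\<And>z. fst z \<noteq> [] \<Longrightarrow> (snd z, last (fst z)) = label (last_below t (Suc l)) \<Longrightarrow>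
      \<exists>xs. valid_run E z xs \<and> stays_above (fst z) z xs \<and> run xs z = (fst z, state (first_below t (Suc l))) \<and>
        X \<le> sum_list (map w xs)"
  shows "\<exists>xs. valid_run E (\<beta>, state (last_below t l)) xs \<and> stays_above \<beta> (\<beta>, state (last_below t l)) xs \<and>
      run xs (\<beta>, state (last_below t l)) = (\<beta>, state (first_below t l)) \<and>
      pw (last_below t (Suc l)) - pw (last_below t l) + X - descent_bound \<le> sum_list (map w xs)"
proof -
  let ?k = "last_below t l" and ?k1 = "last_below t (Suc l)" and ?f1 = "first_below t (Suc l)"
  have l1: "1 \<le> l" using future_min_pos l(1) order_trans by blast
  define \<gamma> where "\<gamma> = last (stack ?k1)"
  define xs1 where "xs1 = map e [?k..<?k1]"
  have up: "valid_run E (\<beta>, state ?k) xs1" "stays_above \<beta> (\<beta>, state ?k) xs1"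
    "run xs1 (\<beta>, state ?k) = (\<beta> @ [\<gamma>], state ?k1)"
    using ascent_replay[OF l1 l(2) \<beta>] by (simp_all add: xs1_def \<gamma>_def)
  have w1: "sum_list (map w xs1) = pw ?k1 - pw ?k"
    using sum_list_segment[OF last_below_mono[OF l1, of "Suc l" t]] by (simp add: xs1_def)
  have "(state ?k1, \<gamma>) = label ?k1" by (simp add: \<gamma>_def label_def)
  then obtain xs2 where mid: "valid_run E (\<beta> @ [\<gamma>], state ?k1) xs2"
      "stays_above (\<beta> @ [\<gamma>]) (\<beta> @ [\<gamma>], state ?k1) xs2"
      "run xs2 (\<beta> @ [\<gamma>], state ?k1) = (\<beta> @ [\<gamma>], state ?f1)" "X \<le> sum_list (map w xs2)"
    using inner[of "(\<beta> @ [\<gamma>], state ?k1)"] by fastforce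
  have "stack ?k1 = take (Suc l) (stack t)" "stack ?k = take l (stack t)"
    using stack_last_below[of "Suc l" t] stack_last_below[OF l1, of t] l(2) by simp_all
  then have "stack ?k1 = stack ?k @ [\<gamma>]"
    using l(2) by (simp add: \<gamma>_def take_Suc_conv_app_nth height_def)
  moreover have "stack ?f1 = stack ?k1" using stack_first_below_last_below[of t "Suc l"] l by simp
  ultimately have f1: "last (stack ?f1) = \<gamma>" "last \<beta> = last (butlast (stack ?f1))" using \<beta>(2) by simp_all
  obtain xs3 where down: "valid_run E (\<beta> @ [\<gamma>], state ?f1) xs3"
      "stays_above \<beta> (\<beta> @ [\<gamma>], state ?f1) xs3" "run xs3 (\<beta> @ [\<gamma>], state ?f1) = (\<beta>, state (first_below t l))"
      "- descent_bound \<le> sum_list (map w xs3)"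
    using descent_summary[OF first_below_descent[OF l] \<beta>(1) f1(2)] unfolding f1(1) by blast
  have "stays_above \<beta> (\<beta> @ [\<gamma>], state ?k1) xs2" using stays_above_mono[OF _ mid(2)] by simp
  then have "valid_run E (\<beta>, state ?k) (xs1 @ xs2 @ xs3) \<and> stays_above \<beta> (\<beta>, state ?k) (xs1 @ xs2 @ xs3) \<and>
      run (xs1 @ xs2 @ xs3) (\<beta>, state ?k) = (\<beta>, state (first_below t l))"
    using up mid(1,3) down(1-3) by simp
  moreover have "pw ?k1 - pw ?k + X - descent_bound \<le> sum_list (map w (xs1 @ xs2 @ xs3))"
    using w1 mid(4) down(4) by simp
  ultimately show ?thesis by blast
qed

lemma summary_run:
  assumes "future_min t \<le> l" "l \<le> height t" "fst z \<noteq> []" "(snd z, last (fst z)) = label (last_below t l)"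
  shows "\<exists>xs. valid_run E z xs \<and> stays_above (fst z) z xs \<and> run xs z = (fst z, state (first_below t l)) \<and>
     pw t - pw (last_below t l) - descent_bound * int (card (level_type t ` {l..height t})) \<le> sum_list (map w xs)"
  using assms
proof (induction "height t - l" arbitrary: l z rule: less_induct)
  case less
  have l1: "1 \<le> l" using future_min_pos less.prems(1) order_trans by blast
  (* l' is the highest level of the same type as l; the excursion between the two is skipped. *)
  obtain l' where l': "l \<le> l'" "l' \<le> height t" "level_type t l' = level_type t l"
    and l'_last: "\<And>k. l' < k \<Longrightarrow> k \<le> height t \<Longrightarrow> level_type t k \<noteq> level_type t l"
    using last_occurrence[OF less.prems(2), of "level_type t"] by blast
  have same: "label (last_below t l') = label (last_below t l)" "state (first_below t l') = state (first_below t l)"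
    using l'(3) by (simp_all add: level_type_def)
  have no_gain: "pw (last_below t l') \<le> pw (last_below t l)"
    using ascent_nonpos[OF l1 l'(1,2)] same(1) by simp
  have z: "z = (fst z, state (last_below t l'))" "last (fst z) = last (stack (last_below t l'))"
    using less.prems(4) same(1) by (auto simp: label_def prod_eq_iff)
  define K where "K = descent_bound * int (card (level_type t ` {l..height t}))"
  have K: "0 \<le> K" using descent_bound_nonneg by (simp add: K_def)
  show ?case
  proof (cases "l' = height t")
    case True
    then have "z = (fst z, state (first_below t l))" "pw t \<le> pw (last_below t l)"
      using z(1) same(2) no_gain by (simp_all add: last_below_height first_below_height)
    then show ?thesis using K by (intro exI[of _ "[]"]) (simp add: K_def)
  next
    case False
    then have l'_lt: "l' < height t" using l'(2) by simp
    have "height t - Suc l' < height t - l" using l'_lt l'(1) by simp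
    then have inner: "\<And>z. fst z \<noteq> [] \<Longrightarrow> (snd z, last (fst z)) = label (last_below t (Suc l')) \<Longrightarrow>
      \<exists>xs. valid_run E z xs \<and> stays_above (fst z) z xs \<and> run xs z = (fst z, state (first_below t (Suc l'))) \<and>
        pw t - pw (last_below t (Suc l')) - descent_bound * int (card (level_type t ` {Suc l'..height t}))
          \<le> sum_list (map w xs)"
      using less.hyps less.prems(1) l'(1) l'_lt by simp
    have "card (level_type t ` {Suc l'..height t}) < card (level_type t ` {l..height t})"
      using card_image_cut[of l l' "height t" "level_type t"] l'(1) l'_lt l'_last by blast
    then have "int (card (level_type t ` {Suc l'..height t})) + 1 \<le> int (card (level_type t ` {l..height t}))"
      by simp
    then have "descent_bound * (int (card (level_type t ` {Suc l'..height t})) + 1) \<le> K"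
      unfolding K_def using descent_bound_nonneg by (rule mult_left_mono)
    have fm: "future_min t \<le> l'" using less.prems(1) l'(1) by simp
    obtain xs where xs: "valid_run E z xs" "stays_above (fst z) z xs" "run xs z = (fst z, state (first_below t l))"
      "pw (last_below t (Suc l')) - pw (last_below t l') + (pw t - pw (last_below t (Suc l')) -
         descent_bound * int (card (level_type t ` {Suc l'..height t}))) - descent_bound \<le> sum_list (map w xs)"
      using wrap_level[OF fm l'_lt less.prems(3) z(2) inner] z(1) same(2) by (metis (no_types, lifting))
    then show ?thesis using \<open>descent_bound * _ \<le> K\<close> no_gain by (intro exI[of _ xs]) (simp add: K_def algebra_simps)
  qed
qed

(* After g, the prefix
   weights exceed pw g by at most a constant: otherwise, leaving the path at the right time, skipping
   the excursion around t by summary_run and returning to the label of g by return_summary would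
   close a good cycle at g. *)
lemma weight_bound_after:
  assumes g: "local_min g" and recur: "infinite {g'. local_min g' \<and> label g' = label g}" and gt: "g \<le> t"
  shows "pw t \<le> pw g + descent_bound * int (card ((Q \<times> \<Gamma>) \<times> Q)) + return_bound (label g)"
proof -
  define d where "d = future_min t"
  define k where "k = last_below t d"
  define f where "f = first_below t d"
  have d: "future_min t \<le> d" "d \<le> height t" "1 \<le> d"
    using future_min_le_height future_min_pos by (simp_all add: d_def)
  have k: "k \<le> t" "g \<le> k"
  proof -
    have "t \<le> f" "height f = d" using first_below[OF d(1)] height_first_below[OF d(1,2)] by (simp_all add: f_def)
    then have "height g \<le> d" using g gt unfolding local_min_def by (metis order_trans)
    then show "k \<le> t" "g \<le> k" using last_below[OF d(3)] last_below_greatest[OF d(3) gt] by (simp_all add: k_def)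
  qed
  have stack_f: "stack f = stack k" using stack_first_below_last_below[OF d(1,2)] by (simp add: f_def k_def)
  obtain xs1 where xs1: "valid_run E (c k) xs1" "stays_above (stack k) (c k) xs1" "run xs1 (c k) = (stack k, state f)"
      "pw t - pw k - descent_bound * int (card (level_type t ` {d..height t})) \<le> sum_list (map w xs1)"
    using summary_run[OF d(1,2), of "c k"] stack_nonempty[of k] by (auto simp: config_eq label_def k_def f_def)
  obtain g' where g': "f \<le> g'" "label g' = label g"
    using recur unfolding infinite_nat_iff_unbounded_le by blast
  obtain xs2 where xs2: "valid_run E (stack k, state f) xs2" "stays_above (stack k) (stack k, state f) xs2"
      "(snd (run xs2 (stack k, state f)), last (fst (run xs2 (stack k, state f)))) = label g"
      "- return_bound (label g) \<le> sum_list (map w xs2)"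
    using return_summary[OF g'(1) _ stack_nonempty[of k]] local_min_first_below stack_f g'(2)
    by (auto simp: f_def d_def)
  have "stays_above (stack g) (c k) xs1" "stays_above (stack g) (stack k, state f) xs2"
    using stays_above_mono[OF local_min_prefix[OF g k(2)]] xs1(2) xs2(2) by blast+
  then have "stays_above (stack g) (c k) (xs1 @ xs2)" using xs1(3) by simp
  then have "pw k - pw g + sum_list (map w (xs1 @ xs2)) \<le> 0"
    using xs1(1,3) xs2(1,3) by (intro excursion_nonpos[OF k(2) local_min_prefix[OF g]]) (simp_all add: label_def)
  moreover have "card (level_type t ` {d..height t}) \<le> card ((Q \<times> \<Gamma>) \<times> Q)"
    using level_type_in finite_Q finite_\<Gamma> by (intro card_mono) (simp, blast)
  then have "descent_bound * int (card (level_type t ` {d..height t})) \<le> descent_bound * int (card ((Q \<times> \<Gamma>) \<times> Q))"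
    using descent_bound_nonneg by (simp add: mult_left_mono)
  ultimately show ?thesis using xs1(4) xs2(4) by simp
qed

(* Some label recurs at infinitely many local minima; the bound after the first of them bounds all
   prefix weights. *)
lemma weight_bounded: "\<exists>B. \<forall>t. pw t \<le> B"
proof -
  have "finite (label ` {g. local_min g})"
    using finite_subset[of _ "Q \<times> \<Gamma>"] label_in finite_Q finite_\<Gamma> by blast
  then obtain g where g: "local_min g" "infinite {g' \<in> {g. local_min g}. label g' = label g}"
    using pigeonhole_infinite[OF infinite_local_min] by blast
  define B where "B = max (pw g + descent_bound * int (card ((Q \<times> \<Gamma>) \<times> Q)) + return_bound (label g)) (Max (pw ` {..g}))"
  have "pw t \<le> B" for t
  proof (cases "g \<le> t")
    case True
    then show ?thesis using weight_bound_after[OF g(1) _ True] g(2) by (simp add: B_def)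
  next
    case False
    then show ?thesis by (simp add: B_def le_max_iff_disj)
  qed
  then show ?thesis by blast
qed

end

(* (i) \<Longrightarrow> (iii), in edge-list form: a path with positive upper mean-payoff must pass through a
   good cycle, since otherwise its prefix weights would be bounded. *)
lemma good_run_of_lim_sup_pos:
  assumes "wps Q \<Gamma> q0 bsym E" "inf_path E c e" "c 0 = ([bsym], q0)" "0 < lim_sup_avg w e"
  shows "\<exists>P Cy. valid_run E (c 0) (P @ Cy) \<and> good_run E w (run P (c 0)) Cy"
proof (rule ccontr)
  assume "\<not> ?thesis"
  then interpret wps_path_no_good Q \<Gamma> q0 bsym E c e w
    using assms(1-3) by unfold_locales auto
  obtain B where "\<And>t. pweight w e t \<le> B" using weight_bounded by blast
  then show False using lim_sup_avg_nonpos[of w e B] assms(4) by simp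
qed

theorem lemma3:
  fixes Q :: "'q set" and \<Gamma> :: "'g set" and q0 :: 'q and bsym :: 'g
    and E :: "('q,'g) edge set" and w :: "('q,'g) edge \<Rightarrow> int"
  assumes "wps Q \<Gamma> q0 bsym E"
  shows "((\<exists>c e. c 0 = ([bsym], q0) \<and> inf_path E c e \<and> lim_sup_avg w e > 0) \<longleftrightarrow>
          (\<exists>c e. c 0 = ([bsym], q0) \<and> inf_path E c e \<and> lim_inf_avg w e > 0)) \<and>
         ((\<exists>c e. c 0 = ([bsym], q0) \<and> inf_path E c e \<and> lim_inf_avg w e > 0) \<longleftrightarrow>
          (\<exists>c e n i j. c 0 = ([bsym], q0) \<and> fin_path E c e n \<and> i \<le> j \<and> j \<le> n \<and>
             good_cycle E w (\<lambda>k. c (i + k)) (\<lambda>k. e (i + k)) (j - i)))"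
    (is "(?i \<longleftrightarrow> ?ii) \<and> (?ii \<longleftrightarrow> ?iii)")
proof -
  have "?i \<Longrightarrow> ?iii"
    using good_run_of_lim_sup_pos[OF assms] good_cycle_of_good_run by metis
  moreover have "?iii \<Longrightarrow> ?ii"
    using good_run_of_good_cycle lim_inf_pos_of_good_run by metis
  moreover have "?ii \<Longrightarrow> ?i"
    using lim_inf_avg_le_lim_sup_avg less_le_trans by metis
  ultimately show ?thesis by blast
qed

end
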